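(* Let $L\subset\mathbb{R}^2$ be a connected set such that for every $P\in L$ there exists $r>0$ for which $B_r(P)\cap L$ is (the image of) a regular curve. Then for any $S,Q\in L$ there exists a regular curve in $L$ having $S$ and $Q$ as its two endpoints.
   Context: A curve $\gamma:[a,b]\to\mathbb{R}^2$ is regular if $-\infty<a<b<\infty$, $\gamma(x)\ne\gamma(y)$ whenever $a\le x<y\le b$ and $(x,y)\ne(a,b)$, $\|\gamma\|_{C^2(a,b)}<\infty$, and $|\gamma'|$ is uniformly bounded away from $0$; a curve defined on an open interval $(a,b)$ is regular if its continuous extension to $[a,b]$ is regular. $B_r(P)$ denotes the open disc. *)

theory Defs
  imports "HOL-Analysis.Analysis"
begin

definition regular_curve :: "(real \<Rightarrow> real^2) \<Rightarrow> real \<Rightarrow> real \<Rightarrow> bool" where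
  "regular_curve \<gamma> a b \<longleftrightarrow>
     a < b \<and>
     continuous_on {a..b} \<gamma> \<and>
     (\<forall>x\<in>{a..b}. \<forall>y\<in>{a..b}. x < y \<and> (x, y) \<noteq> (a, b) \<longrightarrow> \<gamma> x \<noteq> \<gamma> y) \<and>
     (\<exists>\<gamma>' \<gamma>''.
        (\<forall>t\<in>{a<..<b}. (\<gamma> has_vector_derivative \<gamma>' t) (at t) \<and>
                         (\<gamma>' has_vector_derivative \<gamma>'' t) (at t)) \<and>
        continuous_on {a<..<b} \<gamma>'' \<and>
        bounded (\<gamma> ` {a<..<b}) \<and> bounded (\<gamma>' ` {a<..<b}) \<and> bounded (\<gamma>'' ` {a<..<b}) \<and>
        (\<exists>c>0. \<forall>t\<in>{a<..<b}. c \<le> norm (\<gamma>' t)))"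

end

theory Submission
  imports Defs
begin

text \<open>If some chart of \<open>L\<close> is a closed curve image \<open>\<gamma> ` [a, b]\<close>, it is open in \<open>L\<close> and compact,
  so by connectedness \<open>L\<close> is that single curve and a sub-arc joins \<open>S\<close> to \<open>Q\<close>. Otherwise all charts
  are open arcs; \<open>L\<close> is then path-connected, so \<open>S\<close> and \<open>Q\<close> are joined by an arc \<open>g\<close> in \<open>L\<close>.
  Near every parameter, \<open>g\<close> is an increasing reparametrisation of a single chart curve \<open>\<gamma>\<close>.
  The set of \<open>u \<in> (0, 1]\<close> such that \<open>g\<close> on \<open>[0, u]\<close> reparametrises a regular curve is
  therefore open and closed in \<open>(0, 1]\<close>: a regular curve \<open>\<delta>\<close> arriving along \<open>\<gamma>\<close> as \<open>\<gamma> \<circ> k\<close>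
  forces \<open>k\<close> to be twice differentiable with \<open>k' > 0\<close>, and \<open>\<delta>\<close> can be continued as \<open>\<gamma> \<circ> E\<close>
  where \<open>E\<close> is an explicit \<open>C\<^sup>2\<close> function with the same 2-jet as \<open>k\<close> and derivative
  bounded away from \<open>0\<close> and \<open>\<infinity>\<close>.\<close>

section \<open>Regular curves\<close>

definition regular_C2_with ::
    "(real \<Rightarrow> 'a::real_normed_vector) \<Rightarrow> (real \<Rightarrow> 'a) \<Rightarrow> (real \<Rightarrow> 'a) \<Rightarrow> real set \<Rightarrow> bool" where
  "regular_C2_with \<gamma> \<gamma>' \<gamma>'' I \<longleftrightarrow>
     (\<forall>t\<in>I. (\<gamma> has_vector_derivative \<gamma>' t) (at t) \<and> (\<gamma>' has_vector_derivative \<gamma>'' t) (at t)) \<and>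
     continuous_on I \<gamma>'' \<and> bounded (\<gamma> ` I) \<and> bounded (\<gamma>' ` I) \<and> bounded (\<gamma>'' ` I) \<and>
     (\<exists>c>0. \<forall>t\<in>I. c \<le> norm (\<gamma>' t))"

lemma regular_curve_iff:
  "regular_curve \<gamma> a b \<longleftrightarrow> a < b \<and> continuous_on {a..b} \<gamma> \<and>
     (\<forall>x\<in>{a..b}. \<forall>y\<in>{a..b}. x < y \<and> (x, y) \<noteq> (a, b) \<longrightarrow> \<gamma> x \<noteq> \<gamma> y) \<and>
     (\<exists>\<gamma>' \<gamma>''. regular_C2_with \<gamma> \<gamma>' \<gamma>'' {a<..<b})"
  unfolding regular_curve_def regular_C2_with_def by blast

lemma regular_C2_with_derivative_nonzero:
  "regular_C2_with \<gamma> \<gamma>' \<gamma>'' I \<Longrightarrow> t \<in> I \<Longrightarrow> \<gamma>' t \<noteq> 0"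
  unfolding regular_C2_with_def by force

lemma regular_C2_with_subset:
  assumes "regular_C2_with \<gamma> \<gamma>' \<gamma>'' I" "J \<subseteq> I"
  shows "regular_C2_with \<gamma> \<gamma>' \<gamma>'' J"
  using assms unfolding regular_C2_with_def
  by (meson bounded_subset continuous_on_subset image_mono subsetD)

lemma regular_C2_with_reflect:
  assumes "regular_C2_with \<gamma> \<gamma>' \<gamma>'' I"
  shows "regular_C2_with (\<lambda>t. \<gamma> (-t)) (\<lambda>t. - \<gamma>' (-t)) (\<lambda>t. \<gamma>'' (-t)) (uminus ` I)"
proof -
  have d: "\<And>t. t \<in> I \<Longrightarrow> (\<gamma> has_vector_derivative \<gamma>' t) (at t) \<and> (\<gamma>' has_vector_derivative \<gamma>'' t) (at t)"
    and c: "continuous_on I \<gamma>''"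
    using assms unfolding regular_C2_with_def by auto
  have reflect_derivative: "((\<lambda>t. f (-t)) has_vector_derivative - f' (-t)) (at t)"
    if "(f has_vector_derivative f' (-t)) (at (-t))" for f f' :: "real \<Rightarrow> 'a" and t
  proof -
    have "((\<lambda>t. f (-t)) has_vector_derivative (-1) *\<^sub>R f' (-t)) (at t)"
      by (rule vector_diff_chain_at[where f=uminus, unfolded o_def])
         (use that in \<open>auto intro!: derivative_eq_intros\<close>)
    then show ?thesis by simp
  qed
  have "((\<lambda>t. \<gamma> (-t)) has_vector_derivative - \<gamma>' (-t)) (at t) \<and>
        ((\<lambda>t. - \<gamma>' (-t)) has_vector_derivative \<gamma>'' (-t)) (at t)" if "t \<in> uminus ` I" for t
  proof -
    have "-t \<in> I" using that by auto
    then show ?thesis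
      using reflect_derivative[of \<gamma> \<gamma>' t] reflect_derivative[of \<gamma>' \<gamma>'' t] d[of "-t"]
        has_vector_derivative_minus[of "\<lambda>t. \<gamma>' (-t)" "- \<gamma>'' (-t)" "at t"]
      by auto
  qed
  moreover have "continuous_on (uminus ` I) (\<lambda>t. \<gamma>'' (-t))"
    by (rule continuous_on_compose2[OF c]) (auto intro: continuous_intros)
  moreover have "(\<lambda>t. f (-t)) ` uminus ` I = f ` I" for f :: "real \<Rightarrow> 'a"
    by (simp add: image_image)
  moreover have "(\<lambda>t. - \<gamma>' (-t)) ` uminus ` I = uminus ` \<gamma>' ` I"
    by (simp add: image_image)
  ultimately show ?thesis
    using assms unfolding regular_C2_with_def by (auto simp: bounded_uminus)
qed

lemma regular_curve_subinterval:
  assumes "regular_curve \<gamma> a b" "a \<le> p" "p < q" "q \<le> b"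
  shows "regular_curve \<gamma> p q"
proof -
  have "(x, y) \<noteq> (a, b)" if "x \<in> {p..q}" "y \<in> {p..q}" "(x, y) \<noteq> (p, q)" for x y
    using that assms by auto
  moreover have "{p..q} \<subseteq> {a..b}" "{p<..<q} \<subseteq> {a<..<b}" using assms by auto
  ultimately show ?thesis
    using assms unfolding regular_curve_iff
    by (metis (no_types, lifting) continuous_on_subset regular_C2_with_subset subsetD)
qed

lemma regular_curve_reflect:
  assumes "regular_curve \<gamma> a b"
  shows "regular_curve (\<lambda>t. \<gamma> (-t)) (-b) (-a)"
proof -
  obtain \<gamma>' \<gamma>'' where ab: "a < b" and cont: "continuous_on {a..b} \<gamma>"
    and reg: "regular_C2_with \<gamma> \<gamma>' \<gamma>'' {a<..<b}"
    and inj: "\<And>x y. x \<in> {a..b} \<Longrightarrow> y \<in> {a..b} \<Longrightarrow> x < y \<Longrightarrow> (x, y) \<noteq> (a, b) \<Longrightarrow> \<gamma> x \<noteq> \<gamma> y"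
    using assms unfolding regular_curve_iff by auto
  have "continuous_on {-b..-a} (\<lambda>t. \<gamma> (-t))"
    by (rule continuous_on_compose2[OF cont]) (auto intro: continuous_intros)
  moreover have "uminus ` {a<..<b} = {-b<..<-a::real}"
    by (force simp: image_iff intro: bexI[of _ "- _"])
  then have "regular_C2_with (\<lambda>t. \<gamma> (-t)) (\<lambda>t. - \<gamma>' (-t)) (\<lambda>t. \<gamma>'' (-t)) {-b<..<-a}"
    using regular_C2_with_reflect[OF reg] by simp
  moreover have "\<gamma> (-x) \<noteq> \<gamma> (-y)"
    if "x \<in> {-b..-a}" "y \<in> {-b..-a}" "x < y" "(x, y) \<noteq> (-b, -a)" for x y
    using inj[of "-y" "-x"] that by auto
  ultimately show ?thesis
    using ab unfolding regular_curve_iff by auto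
qed

lemma regular_curve_inj_on:
  assumes "regular_curve \<gamma> a b" "a < p" "q \<le> b"
  shows "inj_on \<gamma> {p..q}"
proof -
  have "\<gamma> x \<noteq> \<gamma> y" if "x \<in> {p..q}" "y \<in> {p..q}" "x < y" for x y
    using assms that unfolding regular_curve_iff by auto
  then show ?thesis
    by (metis inj_onI linorder_neqE_linordered_idom)
qed

lemma regular_curve_joining_points:
  assumes "regular_curve \<gamma> a b" "S \<in> \<gamma> ` {a..b}" "Q \<in> \<gamma> ` {a..b}" "S \<noteq> Q"
  shows "\<exists>\<delta> a' b'. regular_curve \<delta> a' b' \<and> \<delta> ` {a'..b'} \<subseteq> \<gamma> ` {a..b} \<and> \<delta> a' = S \<and> \<delta> b' = Q"
proof -
  obtain s q where s: "s \<in> {a..b}" "\<gamma> s = S" and q: "q \<in> {a..b}" "\<gamma> q = Q"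
    using assms(2,3) by blast
  consider "s < q" | "q < s" using assms(4) s q by fastforce
  then show ?thesis
  proof cases
    case 1
    then have "regular_curve \<gamma> s q" using regular_curve_subinterval[OF assms(1)] s q by auto
    then show ?thesis using s q by (intro exI[of _ \<gamma>] exI[of _ s] exI[of _ q]) auto
  next
    case 2
    then have "regular_curve (\<lambda>t. \<gamma> (-t)) (-s) (-q)"
      using regular_curve_subinterval[OF regular_curve_reflect[OF assms(1)]] s q by auto
    moreover have "(\<lambda>t. \<gamma> (-t)) ` {-s..-q} \<subseteq> \<gamma> ` {a..b}"
      using s q by (auto intro!: image_eqI[of _ _ "- _"])
    ultimately show ?thesis
      using s q by (intro exI[of _ "\<lambda>t. \<gamma> (-t)"] exI[of _ "-s"] exI[of _ "-q"]) auto
  qed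
qed

section \<open>Twice differentiable reparametrisations\<close>

lemma has_real_derivative_vec_nth:
  fixes g :: "real \<Rightarrow> real^'n"
  assumes "(g has_vector_derivative g') F"
  shows "((\<lambda>x. g x $ i) has_real_derivative g' $ i) F"
  using bounded_linear.has_vector_derivative[OF bounded_linear_vec_nth assms]
  unfolding has_real_derivative_iff_has_vector_derivative .

lemma inj_on_if_DERIV_nonzero:
  fixes f :: "real \<Rightarrow> real"
  assumes U: "is_interval U"
    and f: "\<And>x. x \<in> U \<Longrightarrow> (f has_real_derivative f' x) (at x)" "\<And>x. x \<in> U \<Longrightarrow> f' x \<noteq> 0"
  shows "inj_on f U"
proof -
  have "f a \<noteq> f b" if "a \<in> U" "b \<in> U" "a < b" for a b
  proof -
    have ab: "x \<in> U" if "a \<le> x" "x \<le> b" for x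
      using U \<open>a \<in> U\<close> \<open>b \<in> U\<close> that by (meson is_interval_1)
    obtain \<xi> where "a < \<xi>" "\<xi> < b" "f b - f a = (b - a) * f' \<xi>"
      using MVT2[of a b f f'] \<open>a < b\<close> f(1) ab by blast
    with f(2) ab \<open>a < b\<close> show ?thesis by force
  qed
  then show ?thesis
    by (metis inj_onI linorder_neqE_linordered_idom)
qed

lemma DERIV_factor_right:
  fixes f k \<phi> :: "real \<Rightarrow> real"
  assumes \<phi>: "(\<phi> has_real_derivative D) (at t)"
    and f: "(f has_real_derivative Df) (at (k t))" "Df \<noteq> 0" "inj_on f U"
    and k: "isCont k t"
    and eq: "\<forall>\<^sub>F y in nhds t. k y \<in> U \<and> \<phi> y = f (k y)"
  shows "(k has_real_derivative D / Df) (at t)"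
proof -
  define c where "c = k t"
  have cU: "c \<in> U" and \<phi>t: "\<phi> t = f c"
    using eventually_nhds_x_imp_x[OF eq] by (auto simp: c_def)
  define Q where "Q = (\<lambda>z. if z = c then Df else (f z - f c) / (z - c))"
  have "(Q \<longlongrightarrow> Df) (at c)"
    using f(1) unfolding has_field_derivative_iff c_def[symmetric]
    by (rule Lim_transform_eventually) (auto simp: Q_def eventually_at_filter)
  then have "isCont Q c"
    by (simp add: isCont_def Q_def)
  then have "((\<lambda>y. Q (k y)) \<longlongrightarrow> Q c) (at t)"
    using isCont_tendsto_compose k by (simp add: isCont_def c_def)
  moreover have Qnz: "Q z \<noteq> 0" if "z \<in> U" for z
    using f(2,3) cU that by (auto simp: Q_def inj_on_def)
  ultimately have "((\<lambda>y. ((\<phi> y - \<phi> t) / (y - t)) / Q (k y)) \<longlongrightarrow> D / Q c) (at t)"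
    using \<phi> cU unfolding has_field_derivative_iff by (intro tendsto_divide) auto
  moreover have "\<forall>\<^sub>F y in at t. ((\<phi> y - \<phi> t) / (y - t)) / Q (k y) = (k y - k t) / (y - t)"
  proof -
    have "\<forall>\<^sub>F y in at t. k y \<in> U \<and> \<phi> y = f (k y)"
      using eq unfolding eventually_at_filter by (auto elim: eventually_mono)
    moreover have "f z - f c = Q z * (z - c)" for z
      by (simp add: Q_def)
    ultimately show ?thesis
      using Qnz by (elim eventually_mono) (simp add: \<phi>t c_def)
  qed
  ultimately show ?thesis
    unfolding has_field_derivative_iff by (auto simp: Q_def intro: Lim_transform_eventually)
qed

lemma reparametrisation_differentiable:
  fixes \<delta> \<gamma> :: "real \<Rightarrow> real^'n" and k :: "real \<Rightarrow> real"
  assumes \<delta>: "\<And>t. t \<in> N \<Longrightarrow> (\<delta> has_vector_derivative \<delta>' t) (at t) \<and> (\<delta>' has_vector_derivative \<delta>'' t) (at t)"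
    and \<gamma>: "\<And>s. s \<in> {p<..<q} \<Longrightarrow> (\<gamma> has_vector_derivative \<gamma>' s) (at s) \<and> (\<gamma>' has_vector_derivative \<gamma>'' s) (at s)"
      "\<And>s. s \<in> {p<..<q} \<Longrightarrow> \<gamma>' s \<noteq> 0"
    and N: "open N" "t1 \<in> N"
    and k: "continuous_on N k" "\<And>t. t \<in> N \<Longrightarrow> k t \<in> {p<..<q}"
    and eq: "\<And>t. t \<in> N \<Longrightarrow> \<delta> t = \<gamma> (k t)"
  obtains e K1 k2 where "e > 0" "ball t1 e \<subseteq> N"
    "\<And>t. t \<in> ball t1 e \<Longrightarrow> (k has_real_derivative K1 t) (at t)" "(K1 has_real_derivative k2) (at t1)"
proof -
  define s1 where "s1 = k t1"
  have s1: "s1 \<in> {p<..<q}" using k N s1_def by auto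
  obtain i where i: "\<gamma>' s1 $ i \<noteq> 0" using \<gamma>(2)[OF s1] by (metis vec_eq_iff zero_index)
  \<comment> \<open>a coordinate of \<open>\<gamma>\<close> with nonzero derivative is a local chart for the parameter\<close>
  define f f' where "f = (\<lambda>s. \<gamma> s $ i)" and "f' = (\<lambda>s. \<gamma>' s $ i)"
  have f: "(f has_real_derivative f' s) (at s)" "(f' has_real_derivative \<gamma>'' s $ i) (at s)"
    if "s \<in> {p<..<q}" for s
    unfolding f_def f'_def using \<gamma>(1)[OF that] has_real_derivative_vec_nth by blast+
  have "isCont f' s1" using s1 f(2) DERIV_isCont by blast
  obtain \<eta> where \<eta>: "\<eta> > 0" "ball s1 \<eta> \<subseteq> {p<..<q}" "\<And>s. s \<in> ball s1 \<eta> \<Longrightarrow> f' s \<noteq> 0"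
  proof -
    obtain \<eta>0 where "\<eta>0 > 0" "\<And>y. dist s1 y < \<eta>0 \<Longrightarrow> f' y \<noteq> 0"
      using continuous_at_avoid[OF \<open>isCont f' s1\<close>] i by (auto simp: f'_def)
    then show thesis
      using s1 by (intro that[of "min \<eta>0 (min (s1 - p) (q - s1))"]) (auto simp: dist_real_def)
  qed
  have inj: "inj_on f (ball s1 \<eta>)"
    using f(1) \<eta> by (intro inj_on_if_DERIV_nonzero[of _ _ f']) (auto simp: is_interval_convex_1)
  obtain e where e: "e > 0" "ball t1 e \<subseteq> N" "\<And>t. t \<in> ball t1 e \<Longrightarrow> k t \<in> ball s1 \<eta>"
  proof -
    have "isCont k t1" using k N by (simp add: continuous_on_eq_continuous_at)
    then obtain e0 where "e0 > 0" "\<And>t. dist t t1 < e0 \<Longrightarrow> dist (k t) s1 < \<eta>"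
      using \<eta>(1) unfolding continuous_at_eps_delta s1_def by blast
    moreover obtain e1 where "e1 > 0" "ball t1 e1 \<subseteq> N" using N openE by blast
    ultimately show thesis
      by (intro that[of "min e0 e1"]) (auto simp: dist_commute)
  qed
  define K1 where "K1 = (\<lambda>t. \<delta>' t $ i / f' (k t))"
  have dk: "(k has_real_derivative K1 t) (at t)" if t: "t \<in> ball t1 e" for t
    unfolding K1_def
  proof (rule DERIV_factor_right[of "\<lambda>y. \<delta> y $ i" _ _ f _ _ "ball s1 \<eta>"])
    show "((\<lambda>y. \<delta> y $ i) has_real_derivative \<delta>' t $ i) (at t)"
      using \<delta> e t has_real_derivative_vec_nth by blast
    have "k t \<in> ball s1 \<eta>" using e(3) t .
    then show "(f has_real_derivative f' (k t)) (at (k t))" "f' (k t) \<noteq> 0"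
      using f(1) \<eta>(2,3) by auto
    show "isCont k t" using k e t by (metis continuous_on_eq_continuous_at N(1) subsetD)
    have "\<forall>\<^sub>F y in nhds t. y \<in> ball t1 e" using t by (intro eventually_nhds_in_open) auto
    then show "\<forall>\<^sub>F y in nhds t. k y \<in> ball s1 \<eta> \<and> \<delta> y $ i = f (k y)"
      by (elim eventually_mono) (use e eq in \<open>auto simp: f_def\<close>)
  qed (use inj in auto)
  have t1: "t1 \<in> ball t1 e" using e by simp
  have "((\<lambda>t. \<gamma>' (k t)) has_vector_derivative K1 t1 *\<^sub>R \<gamma>'' (k t1)) (at t1)"
    using vector_diff_chain_at[OF dk[OF t1, unfolded has_real_derivative_iff_has_vector_derivative]]
      \<gamma>(1) s1 by (auto simp: o_def s1_def)
  then have "((\<lambda>t. f' (k t)) has_real_derivative (K1 t1 *\<^sub>R \<gamma>'' (k t1)) $ i) (at t1)"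
    unfolding f'_def by (rule has_real_derivative_vec_nth)
  moreover have "((\<lambda>t. \<delta>' t $ i) has_real_derivative \<delta>'' t1 $ i) (at t1)"
    using \<delta> N has_real_derivative_vec_nth by blast
  ultimately have "(K1 has_real_derivative
      (\<delta>'' t1 $ i * f' (k t1) - \<delta>' t1 $ i * (K1 t1 *\<^sub>R \<gamma>'' (k t1)) $ i) / (f' (k t1) * f' (k t1))) (at t1)"
    unfolding K1_def using \<eta>(3) e(3)[OF t1] by (intro DERIV_divide) auto
  with e dk show thesis by (intro that) auto
qed

lemma reparametrisation_jet:
  fixes \<delta> \<gamma> :: "real \<Rightarrow> real^'n" and k :: "real \<Rightarrow> real"
  assumes \<delta>: "\<And>t. t \<in> N \<Longrightarrow> (\<delta> has_vector_derivative \<delta>' t) (at t) \<and> (\<delta>' has_vector_derivative \<delta>'' t) (at t)"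
      "\<delta>' t1 \<noteq> 0"
    and \<gamma>: "\<And>s. s \<in> {p<..<q} \<Longrightarrow> (\<gamma> has_vector_derivative \<gamma>' s) (at s) \<and> (\<gamma>' has_vector_derivative \<gamma>'' s) (at s)"
      "\<And>s. s \<in> {p<..<q} \<Longrightarrow> \<gamma>' s \<noteq> 0"
    and N: "open N" "t1 \<in> N"
    and k: "continuous_on N k" "strict_mono_on N k" "\<And>t. t \<in> N \<Longrightarrow> k t \<in> {p<..<q}"
    and eq: "\<And>t. t \<in> N \<Longrightarrow> \<delta> t = \<gamma> (k t)"
  obtains c1 c2 where "c1 > 0" "\<delta>' t1 = c1 *\<^sub>R \<gamma>' (k t1)"
    "\<delta>'' t1 = c2 *\<^sub>R \<gamma>' (k t1) + (c1 * c1) *\<^sub>R \<gamma>'' (k t1)"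
proof -
  obtain e K1 c2 where e: "e > 0" "ball t1 e \<subseteq> N"
    and dk: "\<And>t. t \<in> ball t1 e \<Longrightarrow> (k has_real_derivative K1 t) (at t)"
    and dK1: "(K1 has_real_derivative c2) (at t1)"
    using reparametrisation_differentiable[OF \<delta>(1) \<gamma> N k(1,3) eq] by blast
  have t1: "t1 \<in> ball t1 e" using e by simp
  have \<gamma>'k: "((\<lambda>t. \<gamma>' (k t)) has_vector_derivative K1 t1 *\<^sub>R \<gamma>'' (k t1)) (at t1)"
    using vector_diff_chain_at[OF dk[OF t1, unfolded has_real_derivative_iff_has_vector_derivative]]
      \<gamma>(1) k(3) N by (auto simp: o_def)
  have \<delta>': "\<delta>' t = K1 t *\<^sub>R \<gamma>' (k t)" if t: "t \<in> ball t1 e" for t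
  proof -
    have tN: "t \<in> N" using t e by auto
    have "((\<gamma> \<circ> k) has_vector_derivative K1 t *\<^sub>R \<gamma>' (k t)) (at t)"
      using vector_diff_chain_at[OF dk[OF t, unfolded has_real_derivative_iff_has_vector_derivative]]
        \<gamma>(1) k(3) tN by blast
    then have "(\<delta> has_vector_derivative K1 t *\<^sub>R \<gamma>' (k t)) (at t)"
      by (rule has_vector_derivative_transform_within_open[OF _ N(1) tN]) (simp add: eq)
    then show ?thesis using \<delta>(1)[OF tN] vector_derivative_unique_at by blast
  qed
  have "((\<lambda>t. K1 t *\<^sub>R \<gamma>' (k t)) has_vector_derivative
      K1 t1 *\<^sub>R (K1 t1 *\<^sub>R \<gamma>'' (k t1)) + c2 *\<^sub>R \<gamma>' (k t1)) (at t1)"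
    by (rule has_vector_derivative_scaleR[OF dK1 \<gamma>'k])
  then have "(\<delta>' has_vector_derivative K1 t1 *\<^sub>R (K1 t1 *\<^sub>R \<gamma>'' (k t1)) + c2 *\<^sub>R \<gamma>' (k t1)) (at t1)"
    by (rule has_vector_derivative_transform_within_open[OF _ open_ball t1]) (simp add: \<delta>')
  then have \<delta>'': "\<delta>'' t1 = K1 t1 *\<^sub>R (K1 t1 *\<^sub>R \<gamma>'' (k t1)) + c2 *\<^sub>R \<gamma>' (k t1)"
    using \<delta>(1)[OF N(2)] vector_derivative_unique_at by blast
  have "K1 t1 \<noteq> 0" using \<delta>(2) \<delta>'[OF t1] by auto
  moreover have "\<not> K1 t1 < 0"
  proof
    assume "K1 t1 < 0"
    then obtain d where d: "d > 0" "\<And>h. h > 0 \<Longrightarrow> h < d \<Longrightarrow> k t1 > k (t1 + h)"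
      using DERIV_neg_dec_right[OF dk[OF t1]] by blast
    define h where "h = min d e / 2"
    have "h > 0" "h < d" "t1 + h \<in> N" using d e by (auto simp: h_def dist_real_def)
    then show False using d(2) strict_mono_onD[OF k(2) N(2)] by force
  qed
  ultimately show thesis
    using \<delta>'[OF t1] \<delta>'' by (intro that[of "K1 t1" c2]) (auto simp: algebra_simps)
qed

lemma C2_extension_of_jet:
  fixes c0 c1 c2 t1 :: real
  assumes c1: "c1 > 0"
  obtains E E1 E2 where
    "\<And>t. (E has_real_derivative E1 t) (at t) \<and> (E1 has_real_derivative E2 t) (at t)"
    "continuous_on UNIV E2" "E t1 = c0" "E1 t1 = c1" "E2 t1 = c2"
    "\<And>t. t \<ge> t1 \<Longrightarrow> c1/2 \<le> E1 t \<and> E1 t \<le> 3*c1/2 \<and> \<bar>E2 t\<bar> \<le> \<bar>c2\<bar> \<and> c0 + c1/2*(t-t1) \<le> E t"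
proof -
  \<comment> \<open>\<open>E'' = c2 exp (-M (t - t1))\<close> decays fast enough that \<open>E'\<close> stays within \<open>c1/2\<close> of \<open>c1\<close>\<close>
  define M where "M = max 1 (2*\<bar>c2\<bar>/c1)"
  have "M > 0" "2*\<bar>c2\<bar>/c1 \<le> M" by (auto simp: M_def)
  then have M: "M > 0" "\<bar>c2\<bar>/M \<le> c1/2"
    using c1 by (auto simp: divide_le_eq field_simps)
  define E where "E = (\<lambda>t. c0 + c1*(t-t1) + c2*((t-t1)/M - (1 - exp(-M*(t-t1)))/M^2))"
  define E1 where "E1 = (\<lambda>t. c1 + c2*(1 - exp(-M*(t-t1)))/M)"
  define E2 where "E2 = (\<lambda>t. c2*exp(-M*(t-t1)))"
  have "(E has_real_derivative E1 t) (at t)" "(E1 has_real_derivative E2 t) (at t)" for t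
    unfolding E_def E1_def E2_def using M
    by (auto intro!: derivative_eq_intros simp: field_simps power2_eq_square)
  moreover have "continuous_on UNIV E2" unfolding E2_def by (intro continuous_intros)
  moreover have "c1/2 \<le> E1 t \<and> E1 t \<le> 3*c1/2 \<and> \<bar>E2 t\<bar> \<le> \<bar>c2\<bar> \<and> c0 + c1/2*(t-t1) \<le> E t"
    if t: "t \<ge> t1" for t
  proof -
    define x where "x = exp(-M*(t-t1))"
    have x: "0 < x" "x \<le> 1" "1 - M*(t-t1) \<le> x"
      using M t exp_ge_add_one_self[of "-M*(t-t1)"] by (auto simp: x_def)
    have "\<bar>c2*(1 - x)/M\<bar> = (\<bar>c2\<bar>/M) * (1 - x)" using x M by (simp add: abs_mult)
    also have "\<dots> \<le> \<bar>c2\<bar>/M" using x M mult_left_mono[of "1 - x" 1 "\<bar>c2\<bar>/M"] by auto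
    also have "\<dots> \<le> c1/2" using M by simp
    finally have "\<bar>c2*(1 - x)/M\<bar> \<le> c1/2" .
    moreover have "\<bar>E2 t\<bar> \<le> \<bar>c2\<bar>" using x by (simp add: E2_def x_def[symmetric] abs_mult mult_left_le)
    moreover have "\<bar>c2*((t-t1)/M - (1 - x)/M^2)\<bar> \<le> c1/2*(t-t1)"
    proof -
      have "(t-t1)/M - (1 - x)/M^2 = (M*(t-t1) - (1 - x))/M^2"
        using M by (simp add: field_simps power2_eq_square)
      moreover have "0 \<le> (1 - x)/M^2" using x by simp
      ultimately have "0 \<le> (t-t1)/M - (1 - x)/M^2" "(t-t1)/M - (1 - x)/M^2 \<le> (t-t1)/M"
        using x by (simp_all, linarith)
      then have "\<bar>c2*((t-t1)/M - (1 - x)/M^2)\<bar> \<le> \<bar>c2\<bar> * ((t-t1)/M)"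
        unfolding abs_mult by (intro mult_left_mono) auto
      also have "\<dots> = (\<bar>c2\<bar>/M) * (t-t1)" by simp
      also have "\<dots> \<le> c1/2*(t-t1)" using M t by (intro mult_right_mono) auto
      finally show ?thesis .
    qed
    moreover have "E1 t = c1 + c2*(1 - x)/M" "E t = c0 + c1*(t-t1) + c2*((t-t1)/M - (1 - x)/M^2)"
      by (simp_all add: E_def E1_def x_def)
    ultimately show ?thesis
      unfolding abs_le_iff by linarith
  qed
  ultimately show thesis
    by (intro that[of E E1 E2]) (auto simp: E_def E1_def E2_def)
qed

lemma has_vector_derivative_paste:
  fixes f g :: "real \<Rightarrow> 'a::real_normed_vector"
  assumes f: "\<And>s. s \<in> {t0<..t1} \<Longrightarrow> (f has_vector_derivative f' s) (at s)"
    and g: "\<And>s. s \<in> {t1..<T} \<Longrightarrow> (g has_vector_derivative g' s) (at s)"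
    and "f t1 = g t1" "f' t1 = g' t1" "t \<in> {t0<..<T}"
  shows "((\<lambda>s. if s \<le> t1 then f s else g s) has_vector_derivative (if t \<le> t1 then f' t else g' t)) (at t)"
proof (cases t t1 rule: linorder_cases)
  case less
  with assms(5) have "(f has_vector_derivative f' t) (at t)" by (intro f) auto
  then have "((\<lambda>s. if s \<le> t1 then f s else g s) has_vector_derivative f' t) (at t)"
    by (rule has_vector_derivative_transform_within_open[of _ _ _ "{..<t1}"]) (use less in auto)
  with less show ?thesis by simp
next
  case greater
  with assms(5) have "(g has_vector_derivative g' t) (at t)" by (intro g) auto
  then have "((\<lambda>s. if s \<le> t1 then f s else g s) has_vector_derivative g' t) (at t)"
    by (rule has_vector_derivative_transform_within_open[of _ _ _ "{t1<..}"]) (use greater in auto)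
  with greater show ?thesis by simp
next
  case equal
  define h where "h = (\<lambda>s. if s \<le> t1 then f s else g s)"
  have "(f has_vector_derivative f' t1) (at t1)" "(g has_vector_derivative f' t1) (at t1)"
    using f[of t1] g[of t1] assms(4,5) equal by auto
  then have "(h has_vector_derivative f' t1) (at t1 within {..t1})"
    "(h has_vector_derivative f' t1) (at t1 within {t1..})"
    by (auto intro: has_vector_derivative_transform_within[OF has_vector_derivative_at_within zero_less_one]
        simp: h_def assms(3))
  then have "(h has_vector_derivative f' t1) (at t1 within ({..t1} \<union> {t1..}))"
    unfolding has_vector_derivative_def has_derivative_within by (simp add: Lim_within_Un)
  moreover have "{..t1} \<union> {t1..} = UNIV" by auto
  ultimately show ?thesis using equal by (simp add: h_def)
qed

lemma regular_C2_with_paste: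
  fixes f g :: "real \<Rightarrow> 'a::real_normed_vector"
  assumes f: "regular_C2_with f f' f'' {t0<..t1}" and g: "regular_C2_with g g' g'' {t1..<T}"
    and jet: "f t1 = g t1" "f' t1 = g' t1" "f'' t1 = g'' t1"
  shows "regular_C2_with (\<lambda>s. if s \<le> t1 then f s else g s) (\<lambda>s. if s \<le> t1 then f' s else g' s)
    (\<lambda>s. if s \<le> t1 then f'' s else g'' s) {t0<..<T}"
proof -
  obtain cf cg where c: "cf > 0" "\<forall>t\<in>{t0<..t1}. cf \<le> norm (f' t)" "cg > 0" "\<forall>t\<in>{t1..<T}. cg \<le> norm (g' t)"
    using f g unfolding regular_C2_with_def by blast
  have fd: "\<And>s. s \<in> {t0<..t1} \<Longrightarrow>
      (f has_vector_derivative f' s) (at s) \<and> (f' has_vector_derivative f'' s) (at s)"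
    and gd: "\<And>s. s \<in> {t1..<T} \<Longrightarrow>
      (g has_vector_derivative g' s) (at s) \<and> (g' has_vector_derivative g'' s) (at s)"
    using f g unfolding regular_C2_with_def by auto
  have bounded_paste: "bounded ((\<lambda>s. if s \<le> t1 then h s else k s) ` {t0<..<T})"
    if "bounded (h ` {t0<..t1})" "bounded (k ` {t1..<T})" for h k :: "real \<Rightarrow> 'a"
    using that by (rule bounded_subset[OF bounded_Un[THEN iffD2, OF conjI]]) auto
  note paste = has_vector_derivative_paste[of t0 t1 _ _ T]
  show ?thesis
    unfolding regular_C2_with_def
  proof (intro conjI ballI exI[of _ "min cf cg"])
    fix t assume "t \<in> {t0<..<T}"
    then show "((\<lambda>s. if s \<le> t1 then f s else g s) has_vector_derivative (if t \<le> t1 then f' t else g' t)) (at t)"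
      "((\<lambda>s. if s \<le> t1 then f' s else g' s) has_vector_derivative (if t \<le> t1 then f'' t else g'' t)) (at t)"
      "min cf cg \<le> norm (if t \<le> t1 then f' t else g' t)"
      using paste[OF conjunct1[OF fd] conjunct1[OF gd] jet(1,2)]
        paste[OF conjunct2[OF fd] conjunct2[OF gd] jet(2,3)] c
      by (auto simp: min.coboundedI1 min.coboundedI2)
  next
    show "continuous_on {t0<..<T} (\<lambda>s. if s \<le> t1 then f'' s else g'' s)"
      using f g jet unfolding regular_C2_with_def
      by (intro continuous_on_cases_le[where h=id, unfolded id_def])
         (auto intro: continuous_on_subset continuous_intros)
  next
    show "bounded ((\<lambda>s. if s \<le> t1 then f s else g s) ` {t0<..<T})"
      "bounded ((\<lambda>s. if s \<le> t1 then f' s else g' s) ` {t0<..<T})"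
      "bounded ((\<lambda>s. if s \<le> t1 then f'' s else g'' s) ` {t0<..<T})"
      using f g by (intro bounded_paste; simp add: regular_C2_with_def)+
  qed (use c in simp)
qed

lemma regular_C2_with_reparametrise:
  fixes \<gamma> :: "real \<Rightarrow> 'a::real_normed_vector"
  assumes \<gamma>: "regular_C2_with \<gamma> \<gamma>' \<gamma>'' U"
    and E: "\<And>t. t \<in> I \<Longrightarrow> (E has_real_derivative E1 t) (at t) \<and> (E1 has_real_derivative E2 t) (at t)"
      "continuous_on I E2" "E ` I \<subseteq> U"
    and bounds: "m > 0" "\<And>t. t \<in> I \<Longrightarrow> m \<le> E1 t \<and> E1 t \<le> M \<and> \<bar>E2 t\<bar> \<le> B"
  shows "regular_C2_with (\<lambda>t. \<gamma> (E t)) (\<lambda>t. E1 t *\<^sub>R \<gamma>' (E t))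
    (\<lambda>t. E2 t *\<^sub>R \<gamma>' (E t) + (E1 t * E1 t) *\<^sub>R \<gamma>'' (E t)) I"
proof -
  obtain c where \<gamma>d: "\<And>s. s \<in> U \<Longrightarrow>
      (\<gamma> has_vector_derivative \<gamma>' s) (at s) \<and> (\<gamma>' has_vector_derivative \<gamma>'' s) (at s)"
    and "continuous_on U \<gamma>''" "c > 0" "\<And>s. s \<in> U \<Longrightarrow> c \<le> norm (\<gamma>' s)"
    and "bounded (\<gamma> ` U)" "bounded (\<gamma>' ` U)" "bounded (\<gamma>'' ` U)"
    using \<gamma> unfolding regular_C2_with_def by blast
  then obtain B0 B1 B2 where
    B: "\<And>s. s \<in> U \<Longrightarrow> norm (\<gamma> s) \<le> B0 \<and> norm (\<gamma>' s) \<le> B1 \<and> norm (\<gamma>'' s) \<le> B2"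
    unfolding bounded_iff by (meson imageI)
  have EU: "t \<in> I \<Longrightarrow> E t \<in> U" for t using E(3) by auto
  have "continuous_on I E" "continuous_on I E1"
    using E(1) by (meson DERIV_isCont continuous_at_imp_continuous_on)+
  moreover have "continuous_on U \<gamma>'"
    using \<gamma>d by (meson continuous_at_imp_continuous_on has_vector_derivative_continuous)
  ultimately have "continuous_on I (\<lambda>t. \<gamma>' (E t))" "continuous_on I (\<lambda>t. \<gamma>'' (E t))"
    using continuous_on_compose2 E(3) \<open>continuous_on U \<gamma>''\<close> by blast+
  with \<open>continuous_on I E1\<close> E(2)
  have "continuous_on I (\<lambda>t. E2 t *\<^sub>R \<gamma>' (E t) + (E1 t * E1 t) *\<^sub>R \<gamma>'' (E t))"
    by (intro continuous_intros)
  moreover have "((\<lambda>t. \<gamma> (E t)) has_vector_derivative E1 t *\<^sub>R \<gamma>' (E t)) (at t)"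
    "((\<lambda>t. E1 t *\<^sub>R \<gamma>' (E t)) has_vector_derivative
        E2 t *\<^sub>R \<gamma>' (E t) + (E1 t * E1 t) *\<^sub>R \<gamma>'' (E t)) (at t)" if t: "t \<in> I" for t
  proof -
    note chain = vector_diff_chain_at[OF E(1)[OF t, THEN conjunct1,
          unfolded has_real_derivative_iff_has_vector_derivative], unfolded o_def]
    show "((\<lambda>t. \<gamma> (E t)) has_vector_derivative E1 t *\<^sub>R \<gamma>' (E t)) (at t)"
      using chain \<gamma>d[OF EU[OF t]] by blast
    have "((\<lambda>t. \<gamma>' (E t)) has_vector_derivative E1 t *\<^sub>R \<gamma>'' (E t)) (at t)"
      using chain \<gamma>d[OF EU[OF t]] by blast
    from has_vector_derivative_scaleR[OF E(1)[OF t, THEN conjunct2] this]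
    show "((\<lambda>t. E1 t *\<^sub>R \<gamma>' (E t)) has_vector_derivative
        E2 t *\<^sub>R \<gamma>' (E t) + (E1 t * E1 t) *\<^sub>R \<gamma>'' (E t)) (at t)"
      by (simp add: algebra_simps)
  qed
  moreover have "norm (E1 t *\<^sub>R \<gamma>' (E t)) \<le> M * B1" "m * c \<le> norm (E1 t *\<^sub>R \<gamma>' (E t))"
    "norm (E2 t *\<^sub>R \<gamma>' (E t) + (E1 t * E1 t) *\<^sub>R \<gamma>'' (E t)) \<le> B * B1 + M * M * B2"
    if t: "t \<in> I" for t
  proof -
    have e: "m \<le> E1 t" "E1 t \<le> M" "\<bar>E2 t\<bar> \<le> B" using bounds t by auto
    have g: "norm (\<gamma>' (E t)) \<le> B1" "norm (\<gamma>'' (E t)) \<le> B2" "c \<le> norm (\<gamma>' (E t))"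
      using B \<open>\<And>s. s \<in> U \<Longrightarrow> c \<le> norm (\<gamma>' s)\<close> EU[OF t] by auto
    have E1: "norm (E1 t *\<^sub>R v) = E1 t * norm v" for v :: 'a
      using e bounds(1) by simp
    show "norm (E1 t *\<^sub>R \<gamma>' (E t)) \<le> M * B1"
      unfolding E1 using e g bounds(1) by (intro mult_mono) auto
    show "m * c \<le> norm (E1 t *\<^sub>R \<gamma>' (E t))"
      unfolding E1 using e g bounds(1) \<open>c > 0\<close> by (intro mult_mono) auto
    have "norm (E2 t *\<^sub>R \<gamma>' (E t)) \<le> B * B1"
      using e g by (simp add: mult_mono)
    moreover have "norm ((E1 t * E1 t) *\<^sub>R \<gamma>'' (E t)) \<le> M * M * B2"
      using e g bounds(1) by (simp add: mult_mono)
    ultimately show "norm (E2 t *\<^sub>R \<gamma>' (E t) + (E1 t * E1 t) *\<^sub>R \<gamma>'' (E t)) \<le> B * B1 + M * M * B2"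
      by (meson add_mono norm_triangle_le)
  qed
  moreover have "norm (\<gamma> (E t)) \<le> B0" if "t \<in> I" for t using B EU that by blast
  ultimately show ?thesis
    unfolding regular_C2_with_def bounded_iff using \<open>c > 0\<close> bounds(1)
    by (intro conjI exI[of _ "m * c"] exI[of _ B0] exI[of _ "M * B1"] exI[of _ "B * B1 + M * M * B2"]) auto
qed

lemma C2_reparametrisation_with_jet:
  fixes c0 c1 c2 t1 s :: real
  assumes c1: "c1 > 0" and s: "c0 < s"
  obtains T' E E1 E2 where "t1 < T'" "E t1 = c0" "E T' = s" "E1 t1 = c1" "E2 t1 = c2"
    "\<And>t. (E has_real_derivative E1 t) (at t) \<and> (E1 has_real_derivative E2 t) (at t)"
    "continuous_on UNIV E2" "strict_mono_on {t1..T'} E"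
    "\<And>t. t \<ge> t1 \<Longrightarrow> c1/2 \<le> E1 t \<and> E1 t \<le> 3*c1/2 \<and> \<bar>E2 t\<bar> \<le> \<bar>c2\<bar>"
proof -
  obtain E E1 E2 where Ed: "\<And>t. (E has_real_derivative E1 t) (at t) \<and> (E1 has_real_derivative E2 t) (at t)"
    and E2: "continuous_on UNIV E2" and E0: "E t1 = c0" "E1 t1 = c1" "E2 t1 = c2"
    and Eb: "\<And>t. t \<ge> t1 \<Longrightarrow> c1/2 \<le> E1 t \<and> E1 t \<le> 3*c1/2 \<and> \<bar>E2 t\<bar> \<le> \<bar>c2\<bar> \<and> c0 + c1/2*(t-t1) \<le> E t"
    using C2_extension_of_jet[OF c1] by blast
  have Einc: "E a < E b" if "t1 \<le> a" "a < b" for a b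
  proof (rule DERIV_pos_imp_increasing[OF that(2)])
    fix x assume "a \<le> x" "x \<le> b"
    then show "\<exists>y. (E has_real_derivative y) (at x) \<and> y > 0"
      using Ed Eb[of x] c1 that(1) by (intro exI[of _ "E1 x"]) auto
  qed
  define T2 where "T2 = t1 + 2*(s - c0)/c1"
  have T2: "t1 \<le> T2" using s c1 by (simp add: T2_def)
  moreover have "c1/2*(T2-t1) = s - c0" using c1 by (simp add: T2_def)
  ultimately have "s \<le> E T2" using Eb[of T2] by linarith
  moreover have "continuous_on {t1..T2} E"
    using Ed by (meson DERIV_isCont continuous_at_imp_continuous_on)
  ultimately obtain T' where "t1 \<le> T'" "E T' = s"
    using IVT'[of E t1 s T2] T2 E0 s by auto
  moreover have "strict_mono_on {t1..T'} E" by (auto intro!: strict_mono_onI Einc)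
  ultimately show thesis
    using that[of T' E E1 E2] Ed E2 E0 Eb s by (force simp: le_less)
qed

lemma regular_continuation:
  fixes \<delta> \<gamma> :: "real \<Rightarrow> real^2" and k :: "real \<Rightarrow> real"
  assumes \<delta>: "regular_curve \<delta> t0 T" and t1: "t0 < t1" "t1 < T"
    and \<gamma>: "regular_curve \<gamma> p q"
    and N: "open N" "t1 \<in> N" "N \<subseteq> {t0<..<T}"
    and k: "continuous_on N k" "strict_mono_on N k" "\<And>t. t \<in> N \<Longrightarrow> k t \<in> {p<..<q}"
    and eq: "\<And>t. t \<in> N \<Longrightarrow> \<delta> t = \<gamma> (k t)"
    and s: "k t1 < s" "s \<le> q"
  obtains T' E where "t1 < T'" "continuous_on {t1..T'} E" "strict_mono_on {t1..T'} E"
    "E t1 = k t1" "E T' = s"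
    "continuous_on {t0..T'} (\<lambda>t. if t \<le> t1 then \<delta> t else \<gamma> (E t))"
    "\<exists>F' F''. regular_C2_with (\<lambda>t. if t \<le> t1 then \<delta> t else \<gamma> (E t)) F' F'' {t0<..<T'}"
proof -
  obtain \<delta>' \<delta>'' \<gamma>' \<gamma>'' where cont: "continuous_on {t0..T} \<delta>" "continuous_on {p..q} \<gamma>"
    and \<delta>r: "regular_C2_with \<delta> \<delta>' \<delta>'' {t0<..<T}" and \<gamma>r: "regular_C2_with \<gamma> \<gamma>' \<gamma>'' {p<..<q}"
    using \<delta> \<gamma> unfolding regular_curve_iff by blast
  have \<delta>'t1: "\<delta>' t1 \<noteq> 0" using \<delta>r t1 by (simp add: regular_C2_with_derivative_nonzero)
  have \<gamma>'nz: "\<And>s. s \<in> {p<..<q} \<Longrightarrow> \<gamma>' s \<noteq> 0" using \<gamma>r regular_C2_with_derivative_nonzero by blast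
  have \<delta>d: "\<And>t. t \<in> N \<Longrightarrow> (\<delta> has_vector_derivative \<delta>' t) (at t) \<and> (\<delta>' has_vector_derivative \<delta>'' t) (at t)"
    and \<gamma>d: "\<And>s. s \<in> {p<..<q} \<Longrightarrow> (\<gamma> has_vector_derivative \<gamma>' s) (at s) \<and> (\<gamma>' has_vector_derivative \<gamma>'' s) (at s)"
    using \<delta>r \<gamma>r N(3) unfolding regular_C2_with_def by blast+
  define c0 where "c0 = k t1"
  have c0: "c0 \<in> {p<..<q}" using k(3) N(2) by (simp add: c0_def)
  obtain c1 c2 where c1: "c1 > 0" and jet: "\<delta>' t1 = c1 *\<^sub>R \<gamma>' c0"
    "\<delta>'' t1 = c2 *\<^sub>R \<gamma>' c0 + (c1 * c1) *\<^sub>R \<gamma>'' c0"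
    using reparametrisation_jet[OF \<delta>d \<delta>'t1 \<gamma>d \<gamma>'nz N(1,2) k eq] unfolding c0_def by blast
  have "c0 < s" using s(1) by (simp add: c0_def)
  obtain T' E E1 E2 where T': "t1 < T'" and E0: "E t1 = c0" "E T' = s" "E1 t1 = c1" "E2 t1 = c2"
    and Ed: "\<And>t. (E has_real_derivative E1 t) (at t) \<and> (E1 has_real_derivative E2 t) (at t)"
    and E2: "continuous_on UNIV E2" and Emono: "strict_mono_on {t1..T'} E"
    and Eb: "\<And>t. t \<ge> t1 \<Longrightarrow> c1/2 \<le> E1 t \<and> E1 t \<le> 3*c1/2 \<and> \<bar>E2 t\<bar> \<le> \<bar>c2\<bar>"
    using C2_reparametrisation_with_jet[where ?t1.0=t1 and ?c2.0=c2, OF c1 \<open>c0 < s\<close>] by blast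
  have Econt: "continuous_on A E" for A
    using Ed by (meson DERIV_isCont continuous_at_imp_continuous_on)
  have Erange: "E t \<in> {c0..s}" "t < T' \<Longrightarrow> E t < s" if "t \<in> {t1..T'}" for t
    using that strict_mono_on_leD[OF Emono, of t1 t] strict_mono_on_leD[OF Emono, of t T']
      strict_mono_onD[OF Emono, of t T'] E0 T' by auto
  have Erange': "E ` {t1..<T'} \<subseteq> {p<..<q}"
    using Erange c0 s by fastforce
  have "regular_C2_with \<delta> \<delta>' \<delta>'' {t0<..t1}"
    using t1 by (intro regular_C2_with_subset[OF \<delta>r]) auto
  moreover have "regular_C2_with (\<lambda>t. \<gamma> (E t)) (\<lambda>t. E1 t *\<^sub>R \<gamma>' (E t))
      (\<lambda>t. E2 t *\<^sub>R \<gamma>' (E t) + (E1 t * E1 t) *\<^sub>R \<gamma>'' (E t)) {t1..<T'}"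
    using c1 Eb Ed by (intro regular_C2_with_reparametrise[OF \<gamma>r _ _ Erange', of E1 E2 "c1/2" "3*c1/2" "\<bar>c2\<bar>"])
       (auto intro: continuous_on_subset[OF E2])
  moreover have "\<delta> t1 = \<gamma> (E t1)" "\<delta>' t1 = E1 t1 *\<^sub>R \<gamma>' (E t1)"
    "\<delta>'' t1 = E2 t1 *\<^sub>R \<gamma>' (E t1) + (E1 t1 * E1 t1) *\<^sub>R \<gamma>'' (E t1)"
    using eq[OF N(2)] jet E0 by (simp_all add: c0_def)
  ultimately have "\<exists>F' F''. regular_C2_with (\<lambda>t. if t \<le> t1 then \<delta> t else \<gamma> (E t)) F' F'' {t0<..<T'}"
    using regular_C2_with_paste by blast
  moreover have "continuous_on {t0..T'} (\<lambda>t. if t \<le> t1 then \<delta> t else \<gamma> (E t))"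
  proof (intro continuous_on_cases_le[where h=id, unfolded id_def])
    show "continuous_on {t \<in> {t0..T'}. t \<le> t1} \<delta>"
      by (rule continuous_on_subset[OF cont(1)]) (use t1 in auto)
    show "continuous_on {t \<in> {t0..T'}. t1 \<le> t} (\<lambda>t. \<gamma> (E t))"
      by (rule continuous_on_compose2[OF cont(2) Econt]) (use Erange(1) c0 s in force)
  qed (use eq[OF N(2)] E0 in \<open>auto simp: c0_def intro: continuous_intros\<close>)
  ultimately show thesis
    using T' Emono E0 by (intro that[OF _ Econt]) (auto simp: c0_def)
qed

section \<open>Charts of L\<close>

lemma path_connected_if_locally_path_connected_nbhd:
  assumes "connected S"
    and nbhd: "\<And>x. x \<in> S \<Longrightarrow> \<exists>U. openin (top_of_set S) U \<and> x \<in> U \<and> path_connected U"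
  shows "path_connected S"
  unfolding path_connected_component
proof (intro ballI)
  fix x y assume "x \<in> S" "y \<in> S"
  show "path_component S x y"
  proof (rule connected_equivalence_relation[OF assms(1) \<open>x \<in> S\<close> \<open>y \<in> S\<close>])
    fix a assume "a \<in> S"
    then obtain U where "openin (top_of_set S) U" "a \<in> U" "path_connected U"
      using nbhd by blast
    then show "\<exists>T. openin (top_of_set S) T \<and> a \<in> T \<and> (\<forall>x\<in>T. path_component S a x)"
      by (meson openin_imp_subset path_component_of_subset path_connected_component)
  qed (auto intro: path_component_sym path_component_trans)
qed

lemma connected_locally_regular_curve_imp_path_connected:
  fixes L :: "(real^2) set"
  assumes "connected L"
    and charts: "\<forall>P\<in>L. \<exists>r>0. \<exists>\<gamma> a b. regular_curve \<gamma> a b \<and>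
            (ball P r \<inter> L = \<gamma> ` {a..b} \<or> ball P r \<inter> L = \<gamma> ` {a<..<b})"
  shows "path_connected L"
proof (rule path_connected_if_locally_path_connected_nbhd[OF assms(1)])
  fix P assume "P \<in> L"
  obtain r \<gamma> a b where "r > 0" "regular_curve \<gamma> a b"
    and img: "ball P r \<inter> L = \<gamma> ` {a..b} \<or> ball P r \<inter> L = \<gamma> ` {a<..<b}"
    using bspec[OF charts \<open>P \<in> L\<close>] by blast
  have "continuous_on {a..b} \<gamma>" using \<open>regular_curve \<gamma> a b\<close> unfolding regular_curve_iff by blast
  moreover have "{a<..<b} \<subseteq> {a..b}" by auto
  ultimately have "continuous_on {a<..<b} \<gamma>" by (rule continuous_on_subset)
  then have "path_connected (\<gamma> ` {a..b})" "path_connected (\<gamma> ` {a<..<b})"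
    using \<open>continuous_on {a..b} \<gamma>\<close>
    by (simp_all add: path_connected_continuous_image convex_imp_path_connected)
  then have "path_connected (ball P r \<inter> L)"
    using img by metis
  moreover have "openin (top_of_set L) (ball P r \<inter> L)"
    by (simp add: Int_commute openin_open_Int)
  moreover have "P \<in> ball P r \<inter> L" using \<open>P \<in> L\<close> \<open>r > 0\<close> by simp
  ultimately show "\<exists>U. openin (top_of_set L) U \<and> P \<in> U \<and> path_connected U"
    by blast
qed

lemma closed_chart_covers:
  fixes L :: "'a::metric_space set" and \<gamma> :: "real \<Rightarrow> 'a"
  assumes "connected L" "P \<in> L" "r > 0" "ball P r \<inter> L = \<gamma> ` {a..b}" "continuous_on {a..b} \<gamma>"
  shows "\<gamma> ` {a..b} = L"
proof -
  have "openin (top_of_set L) (\<gamma> ` {a..b})"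
    using assms(4) openin_open_Int[of "ball P r" L] by (simp add: Int_commute)
  moreover have "closedin (top_of_set L) (\<gamma> ` {a..b})"
    using assms(4,5) compact_continuous_image[OF assms(5) compact_Icc]
    by (metis compact_imp_closed closed_subset inf.cobounded2)
  moreover have "\<gamma> ` {a..b} \<noteq> {}" using assms(2-4) by (metis IntI centre_in_ball empty_iff)
  ultimately show ?thesis
    using assms(1) unfolding connected_clopen by blast
qed

lemma open_chart_compact_core:
  fixes L :: "(real^2) set"
  assumes \<gamma>: "regular_curve \<gamma> a b" and "r > 0" "P \<in> L" and chart: "ball P r \<inter> L = \<gamma> ` {a<..<b}"
  obtains p q r' where "a < p" "p < q" "q < b" "r' > 0" "ball P r' \<inter> L \<subseteq> \<gamma> ` {p..q}"
proof -
  have cont: "continuous_on {a..b} \<gamma>"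
    and inj: "\<And>x y. x \<in> {a..b} \<Longrightarrow> y \<in> {a..b} \<Longrightarrow> x < y \<Longrightarrow> (x, y) \<noteq> (a, b) \<Longrightarrow> \<gamma> x \<noteq> \<gamma> y"
    using \<gamma> unfolding regular_curve_iff by auto
  obtain s0 where s0: "s0 \<in> {a<..<b}" "\<gamma> s0 = P"
    using chart \<open>P \<in> L\<close> \<open>r > 0\<close> by (metis IntI centre_in_ball imageE)
  define p q where "p = (a + s0)/2" and "q = (s0 + b)/2"
  have pq: "a < p" "p < s0" "s0 < q" "q < b" using s0 by (auto simp: p_def q_def)
  \<comment> \<open>\<open>P\<close> has positive distance from the image of the two end pieces\<close>
  define K where "K = \<gamma> ` ({a..p} \<union> {q..b})"
  have "compact K" unfolding K_def
    by (rule compact_continuous_image[OF continuous_on_subset[OF cont]]) (use pq in auto)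
  moreover have "P \<notin> K"
  proof
    assume "P \<in> K"
    then obtain x where x: "x \<in> {a..p} \<union> {q..b}" "\<gamma> x = P" unfolding K_def by blast
    then show False
      using inj[of x s0] inj[of s0 x] s0 pq by (cases "x \<le> p") auto
  qed
  ultimately obtain r2 where r2: "r2 > 0" "ball P r2 \<subseteq> - K"
    by (metis ComplI compact_imp_closed open_Compl open_contains_ball)
  have "ball P (min r r2) \<inter> L \<subseteq> \<gamma> ` {p..q}"
  proof
    fix y assume y: "y \<in> ball P (min r r2) \<inter> L"
    then have "y \<in> \<gamma> ` {a<..<b}" using chart by auto
    then obtain x where x: "x \<in> {a<..<b}" "y = \<gamma> x" by blast
    moreover have "y \<notin> K" using y r2 by auto
    ultimately show "y \<in> \<gamma> ` {p..q}" unfolding K_def by force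
  qed
  then show thesis using pq \<open>r > 0\<close> r2 by (intro that) auto
qed

definition regular_factorisation ::
    "(real \<Rightarrow> real^2) \<Rightarrow> real set \<Rightarrow> (real \<Rightarrow> real^2) \<Rightarrow> real \<Rightarrow> real \<Rightarrow> (real \<Rightarrow> real) \<Rightarrow> bool" where
  "regular_factorisation g J \<gamma> p q h \<longleftrightarrow> regular_curve \<gamma> p q \<and> continuous_on J h \<and> strict_mono_on J h \<and>
     (\<forall>w\<in>J. h w \<in> {p..q} \<and> g w = \<gamma> (h w))"

lemma arc_regular_factorisation:
  fixes g :: "real \<Rightarrow> real^2"
  assumes arc: "arc g" and gL: "path_image g \<subseteq> L" and u: "u \<in> {0..1}"
    and chart: "regular_curve \<gamma> a b" "r > 0" "ball (g u) r \<inter> L = \<gamma> ` {a<..<b}"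
  obtains \<gamma>\<^sub>1 p q \<epsilon> h where "\<epsilon> > 0" "regular_factorisation g (ball u \<epsilon> \<inter> {0..1}) \<gamma>\<^sub>1 p q h"
proof -
  have gc: "continuous_on {0..1} g" and gi: "inj_on g {0..1}" using arc by (auto simp: arc_def path_def)
  have "g u \<in> L" using gL u by (auto simp: path_image_def)
  obtain p q r' where pq: "a < p" "p < q" "q < b" and "r' > 0"
    and core: "ball (g u) r' \<inter> L \<subseteq> \<gamma> ` {p..q}"
    by (rule open_chart_compact_core[OF chart(1,2) \<open>g u \<in> L\<close> chart(3)])
  have \<gamma>pq: "regular_curve \<gamma> p q" using regular_curve_subinterval[OF chart(1)] pq by auto
  obtain \<epsilon> where \<epsilon>: "\<epsilon> > 0" "\<And>w. w \<in> {0..1} \<Longrightarrow> dist w u < \<epsilon> \<Longrightarrow> dist (g w) (g u) < r'"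
    using gc u \<open>r' > 0\<close> unfolding continuous_on_iff by metis
  define J where "J = ball u \<epsilon> \<inter> {0..1}"
  have gJ: "g w \<in> \<gamma> ` {p..q}" if "w \<in> J" for w
  proof -
    have "g w \<in> L" using gL that by (auto simp: J_def path_image_def)
    moreover have "g w \<in> ball (g u) r'" using \<epsilon>(2)[of w] that by (auto simp: J_def dist_commute)
    ultimately show ?thesis using core by blast
  qed
  \<comment> \<open>the parameter of \<open>g w\<close> on \<open>\<gamma>\<close>, continuous because \<open>\<gamma>\<close> is injective on the compact \<open>[p, q]\<close>\<close>
  define h where "h = (\<lambda>w. inv_into {p..q} \<gamma> (g w))"
  have h: "h w \<in> {p..q} \<and> g w = \<gamma> (h w)" if "w \<in> J" for w
    using gJ[OF that] unfolding h_def by (metis f_inv_into_f inv_into_into)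
  have "continuous_on (\<gamma> ` {p..q}) (inv_into {p..q} \<gamma>)"
    using \<gamma>pq regular_curve_inj_on[OF chart(1) pq(1)] pq unfolding regular_curve_iff
    by (intro continuous_on_inv[OF _ compact_Icc]) auto
  then have hc: "continuous_on J h"
    unfolding h_def
    by (rule continuous_on_compose2[OF _ continuous_on_subset[OF gc]]) (use gJ in \<open>auto simp: J_def\<close>)
  have "inj_on h J"
    using gi h by (auto simp: J_def inj_on_def)
  moreover have "is_interval J"
    unfolding J_def by (simp add: is_interval_Int is_interval_ball_real is_interval_cc)
  ultimately have "strict_mono_on J h \<or> strict_antimono_on J h"
    using injective_eq_monotone_map hc by blast
  then show thesis
  proof
    assume "strict_mono_on J h"
    then show thesis
      using \<epsilon> \<gamma>pq hc h by (intro that[of \<epsilon> \<gamma> p q h]) (auto simp: regular_factorisation_def J_def)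
  next
    assume "strict_antimono_on J h"
    then have "strict_mono_on J (\<lambda>w. - h w)" by (auto simp: monotone_on_def)
    moreover have "continuous_on J (\<lambda>w. - h w)" by (intro continuous_intros hc)
    ultimately show thesis
      using \<epsilon> regular_curve_reflect[OF \<gamma>pq] h
      by (intro that[of \<epsilon> "\<lambda>t. \<gamma> (-t)" "-q" "-p" "\<lambda>w. - h w"])
         (auto simp: regular_factorisation_def J_def)
  qed
qed

section \<open>Continuation along an arc\<close>

lemma continuous_strict_mono_inverse:
  fixes h :: "real \<Rightarrow> real"
  assumes h: "continuous_on {a..b} h" "strict_mono_on {a..b} h" and "a \<le> b"
  obtains k where "continuous_on {h a..h b} k" "strict_mono_on {h a..h b} k"
    "\<And>y. y \<in> {h a..h b} \<Longrightarrow> k y \<in> {a..b} \<and> h (k y) = y" "\<And>x. x \<in> {a..b} \<Longrightarrow> k (h x) = x"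
proof -
  have le: "h x \<le> h y \<longleftrightarrow> x \<le> y" if "x \<in> {a..b}" "y \<in> {a..b}" for x y
    using strict_mono_on_less_eq[OF h(2) that] .
  have img: "h ` {a..b} = {h a..h b}"
  proof
    show "h ` {a..b} \<subseteq> {h a..h b}" using le \<open>a \<le> b\<close> by auto
    show "{h a..h b} \<subseteq> h ` {a..b}"
      using IVT'[OF _ _ \<open>a \<le> b\<close> h(1)] by (force simp: image_iff)
  qed
  define k where "k = inv_into {a..b} h"
  have inj: "inj_on h {a..b}" by (rule strict_mono_on_imp_inj_on[OF h(2)])
  have k: "k y \<in> {a..b} \<and> h (k y) = y" if "y \<in> {h a..h b}" for y
    using that img unfolding k_def by (metis f_inv_into_f inv_into_into)
  have "continuous_on {h a..h b} k"
    unfolding k_def img[symmetric] by (rule continuous_on_inv[OF h(1) compact_Icc]) (simp add: inj k_def)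
  moreover have "strict_mono_on {h a..h b} k"
    using k le by (intro strict_mono_onI) (metis atLeastAtMost_iff linorder_not_le)
  moreover have "k (h x) = x" if "x \<in> {a..b}" for x
    unfolding k_def using inj that by simp
  ultimately show thesis using k that by blast
qed

definition regular_prefix :: "(real \<Rightarrow> real^2) \<Rightarrow> real \<Rightarrow> bool" where
  "regular_prefix g u \<longleftrightarrow> (\<exists>\<delta> t0 T \<phi>. regular_curve \<delta> t0 T \<and> continuous_on {t0..T} \<phi> \<and>
     strict_mono_on {t0..T} \<phi> \<and> \<phi> t0 = 0 \<and> \<phi> T = u \<and> (\<forall>t\<in>{t0..T}. \<delta> t = g (\<phi> t)))"

lemma regular_prefix_start:
  assumes "\<epsilon> > 0" and fac: "regular_factorisation g (ball 0 \<epsilon> \<inter> {0..1}) \<gamma> p q h"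
  obtains u0 where "0 < u0" "u0 \<le> 1" "regular_prefix g u0"
proof -
  define u0 where "u0 = min (\<epsilon>/2) (1/2)"
  have u0: "0 < u0" "u0 \<le> 1" and sub: "{0..u0} \<subseteq> ball 0 \<epsilon> \<inter> {0..1}"
    using \<open>\<epsilon> > 0\<close> by (auto simp: u0_def)
  have hc: "continuous_on {0..u0} h" and hm: "strict_mono_on {0..u0} h"
    and h: "\<And>w. w \<in> {0..u0} \<Longrightarrow> h w \<in> {p..q} \<and> g w = \<gamma> (h w)"
    using fac sub unfolding regular_factorisation_def
    by (meson continuous_on_subset monotone_on_subset subsetD)+
  obtain k where kc: "continuous_on {h 0..h u0} k" and km: "strict_mono_on {h 0..h u0} k"
    and k: "\<And>y. y \<in> {h 0..h u0} \<Longrightarrow> k y \<in> {0..u0} \<and> h (k y) = y" "\<And>x. x \<in> {0..u0} \<Longrightarrow> k (h x) = x"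
    using continuous_strict_mono_inverse[OF hc hm] u0 by (metis less_imp_le)
  have "regular_curve \<gamma> p q" using fac by (simp add: regular_factorisation_def)
  moreover have "p \<le> h 0" "h 0 < h u0" "h u0 \<le> q"
    using h[of 0] h[of u0] strict_mono_onD[OF hm, of 0 u0] u0 by auto
  ultimately have "regular_curve \<gamma> (h 0) (h u0)"
    by (rule regular_curve_subinterval)
  moreover have "\<gamma> t = g (k t)" if "t \<in> {h 0..h u0}" for t
    using h k that by metis
  moreover have "k (h 0) = 0" "k (h u0) = u0" using k(2) u0 by auto
  ultimately have "regular_prefix g u0"
    unfolding regular_prefix_def using kc km
    by (intro exI[of _ \<gamma>] exI[of _ "h 0"] exI[of _ "h u0"] exI[of _ k]) auto
  with u0 show thesis by (rule that)
qed

lemma regular_prefix_shorten: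
  assumes "regular_prefix g u" "0 < v" "v \<le> u"
  shows "regular_prefix g v"
proof -
  obtain \<delta> t0 T \<phi> where \<delta>: "regular_curve \<delta> t0 T" and \<phi>c: "continuous_on {t0..T} \<phi>"
    and \<phi>m: "strict_mono_on {t0..T} \<phi>" and \<phi>0: "\<phi> t0 = 0" and \<phi>T: "\<phi> T = u"
    and \<delta>g: "\<forall>t\<in>{t0..T}. \<delta> t = g (\<phi> t)"
    using assms(1) unfolding regular_prefix_def by blast
  have "t0 < T" using \<delta> by (simp add: regular_curve_iff)
  then obtain tv where tv: "t0 \<le> tv" "tv \<le> T" "\<phi> tv = v"
    using IVT'[of \<phi> t0 v T, OF _ _ _ \<phi>c] \<phi>0 \<phi>T assms(2,3) by auto
  then have "t0 < tv" using \<phi>0 assms(2) by (metis order_le_less less_irrefl)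
  then have "regular_curve \<delta> t0 tv" using regular_curve_subinterval[OF \<delta>] tv by auto
  moreover have "{t0..tv} \<subseteq> {t0..T}" using tv by auto
  ultimately show ?thesis
    unfolding regular_prefix_def using \<phi>c \<phi>m \<phi>0 tv \<delta>g
    by (intro exI[of _ \<delta>] exI[of _ t0] exI[of _ tv] exI[of _ \<phi>])
       (auto intro: continuous_on_subset[OF \<phi>c] monotone_on_subset[OF \<phi>m])
qed

lemma continuous_strict_mono_near_endpoint:
  fixes \<phi> :: "real \<Rightarrow> real"
  assumes "continuous_on {t0..T} \<phi>" "strict_mono_on {t0..T} \<phi>" "t0 < T" "open U" "\<phi> T \<in> U"
  obtains lo where "t0 \<le> lo" "lo < T" "\<And>t. t \<in> {lo<..<T} \<Longrightarrow> \<phi> t \<in> U \<and> \<phi> t0 < \<phi> t \<and> \<phi> t \<le> \<phi> T"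
proof -
  obtain r where r: "r > 0" "ball (\<phi> T) r \<subseteq> U" using assms(4,5) openE by blast
  obtain d where d: "d > 0" "\<And>t. t \<in> {t0..T} \<Longrightarrow> dist t T < d \<Longrightarrow> dist (\<phi> t) (\<phi> T) < r"
    using assms(1,3) r(1) unfolding continuous_on_iff by (metis atLeastAtMost_iff less_imp_le order_refl)
  show thesis
  proof (rule that[of "max t0 (T - d)"])
    fix t assume t: "t \<in> {max t0 (T - d)<..<T}"
    then have "dist (\<phi> t) (\<phi> T) < r" using d by (auto simp: dist_real_def)
    then have "\<phi> t \<in> U" using r(2) by (auto simp: dist_commute)
    moreover have "\<phi> t0 < \<phi> t" "\<phi> t \<le> \<phi> T"
      using t strict_mono_onD[OF assms(2), of t0 t] strict_mono_on_leD[OF assms(2), of t T] by auto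
    ultimately show "\<phi> t \<in> U \<and> \<phi> t0 < \<phi> t \<and> \<phi> t \<le> \<phi> T" by blast
  qed (use assms(3) d(1) in auto)
qed

lemma strict_mono_on_paste:
  fixes f g :: "real \<Rightarrow> real"
  assumes "strict_mono_on {a..c} f" "strict_mono_on {c..b} g" "f c = g c"
  shows "strict_mono_on {a..b} (\<lambda>t. if t \<le> c then f t else g t)"
proof (rule strict_mono_onI)
  fix x y assume xy: "x \<in> {a..b}" "y \<in> {a..b}" "x < y"
  show "(if x \<le> c then f x else g x) < (if y \<le> c then f y else g y)"
  proof (cases "y \<le> c")
    case True
    then show ?thesis using xy strict_mono_onD[OF assms(1), of x y] by auto
  next
    case False
    then have "g c < g y" if "x \<le> c" using xy that strict_mono_onD[OF assms(2), of c y] by auto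
    moreover have "f x \<le> f c" if "x \<le> c" using xy that strict_mono_on_leD[OF assms(1), of x c] by auto
    ultimately show ?thesis
      using False xy assms(3) strict_mono_onD[OF assms(2), of x y] by auto
  qed
qed

lemma regular_prefixI:
  assumes "inj_on g {0..1}" "t0 < T" "continuous_on {t0..T} F" "regular_C2_with F F' F'' {t0<..<T}"
    "continuous_on {t0..T} \<psi>" "strict_mono_on {t0..T} \<psi>" "\<psi> t0 = 0" "\<psi> T = v" "v \<le> 1"
    "\<And>t. t \<in> {t0..T} \<Longrightarrow> F t = g (\<psi> t)"
  shows "regular_prefix g v"
proof -
  have \<psi>01: "\<psi> t \<in> {0..1}" if "t \<in> {t0..T}" for t
    using that assms(2,7-9) strict_mono_on_leD[OF assms(6), of t0 t] strict_mono_on_leD[OF assms(6), of t T]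
    by auto
  have "F x \<noteq> F y" if "x \<in> {t0..T}" "y \<in> {t0..T}" "x < y" for x y
    using that \<psi>01 strict_mono_onD[OF assms(6) that] assms(1,10) by (metis inj_on_eq_iff less_irrefl)
  then have "regular_curve F t0 T"
    unfolding regular_curve_iff using assms(2-4) by blast
  then show ?thesis
    unfolding regular_prefix_def using assms(5-8,10) by blast
qed

lemma regular_prefix_glue:
  fixes g \<gamma> F :: "real \<Rightarrow> real^2"
  assumes gi: "inj_on g {0..1}" and t1: "t0 < t1" "t1 < T'"
    and F: "continuous_on {t0..T'} F" "regular_C2_with F F' F'' {t0<..<T'}"
    and \<phi>: "continuous_on {t0..t1} \<phi>" "strict_mono_on {t0..t1} \<phi>" "\<phi> t0 = 0"
      "\<And>t. t \<in> {t0..t1} \<Longrightarrow> F t = g (\<phi> t)"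
    and E: "continuous_on {t1..T'} E" "strict_mono_on {t1..T'} E" "E t1 = h (\<phi> t1)" "E T' = h v"
      "\<And>t. t \<in> {t1<..T'} \<Longrightarrow> F t = \<gamma> (E t)"
    and h: "continuous_on {\<phi> t1..v} h" "strict_mono_on {\<phi> t1..v} h" "\<And>w. w \<in> {\<phi> t1..v} \<Longrightarrow> g w = \<gamma> (h w)"
    and v: "\<phi> t1 \<le> v" "v \<le> 1"
  shows "regular_prefix g v"
proof -
  obtain k where kc: "continuous_on {h (\<phi> t1)..h v} k" and km: "strict_mono_on {h (\<phi> t1)..h v} k"
    and k: "\<And>y. y \<in> {h (\<phi> t1)..h v} \<Longrightarrow> k y \<in> {\<phi> t1..v} \<and> h (k y) = y"
      "\<And>x. x \<in> {\<phi> t1..v} \<Longrightarrow> k (h x) = x"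
    using continuous_strict_mono_inverse[OF h(1,2) v(1)] by blast
  have Erange: "E t \<in> {h (\<phi> t1)..h v}" if "t \<in> {t1..T'}" for t
    using that strict_mono_on_leD[OF E(2), of t1 t] strict_mono_on_leD[OF E(2), of t T'] t1 E(3,4) by auto
  define \<psi> where "\<psi> = (\<lambda>t. if t \<le> t1 then \<phi> t else k (E t))"
  have \<psi>t1: "k (E t1) = \<phi> t1" using E(3) k(2) v(1) by simp
  have "continuous_on {t0..T'} \<psi>"
    unfolding \<psi>_def
  proof (intro continuous_on_cases_le[where h=id, unfolded id_def])
    show "continuous_on {t \<in> {t0..T'}. t \<le> t1} \<phi>"
      by (rule continuous_on_subset[OF \<phi>(1)]) auto
    show "continuous_on {t \<in> {t0..T'}. t1 \<le> t} (\<lambda>t. k (E t))"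
      by (rule continuous_on_compose2[OF kc continuous_on_subset[OF E(1)]]) (use Erange in auto)
  qed (use \<psi>t1 in \<open>auto intro: continuous_intros\<close>)
  moreover have "strict_mono_on {t0..T'} \<psi>"
    unfolding \<psi>_def
  proof (rule strict_mono_on_paste[OF \<phi>(2)])
    show "strict_mono_on {t1..T'} (\<lambda>t. k (E t))"
      using Erange by (intro strict_mono_onI strict_mono_onD[OF km] strict_mono_onD[OF E(2)]) auto
  qed (use \<psi>t1 in simp)
  moreover have "F t = g (\<psi> t)" if "t \<in> {t0..T'}" for t
  proof (cases "t \<le> t1")
    case False
    then show ?thesis using k(1)[OF Erange] h(3) E(5) that by (auto simp: \<psi>_def)
  qed (use \<phi>(4) that in \<open>auto simp: \<psi>_def\<close>)
  moreover have "\<psi> t0 = 0" "\<psi> T' = v"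
    using \<phi>(3) t1 E(4) k(2)[of v] v(1) by (auto simp: \<psi>_def)
  ultimately show ?thesis
    using regular_prefixI[OF gi _ F] t1 v(2) by fastforce
qed

lemma regular_prefix_extend:
  assumes gi: "inj_on g {0..1}"
    and fac: "regular_factorisation g J \<gamma> p q h" and J: "J = ball c \<epsilon> \<inter> {0..1}"
    and u: "u \<in> J" "0 < u" and v: "v \<in> J" "u < v" and pre: "regular_prefix g u"
  shows "regular_prefix g v"
proof -
  obtain \<delta> t0 T \<phi> where \<delta>: "regular_curve \<delta> t0 T" and \<phi>c: "continuous_on {t0..T} \<phi>"
    and \<phi>m: "strict_mono_on {t0..T} \<phi>" and \<phi>0: "\<phi> t0 = 0" and \<phi>T: "\<phi> T = u"
    and \<delta>g: "\<And>t. t \<in> {t0..T} \<Longrightarrow> \<delta> t = g (\<phi> t)"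
    using pre unfolding regular_prefix_def by blast
  have tT: "t0 < T" using \<delta> by (simp add: regular_curve_iff)
  have \<gamma>: "regular_curve \<gamma> p q" and hc: "continuous_on J h" and hm: "strict_mono_on J h"
    and h: "\<And>w. w \<in> J \<Longrightarrow> h w \<in> {p..q} \<and> g w = \<gamma> (h w)"
    using fac unfolding regular_factorisation_def by auto
  have Jconv: "x \<in> J" if "a \<in> J" "b \<in> J" "a \<le> x" "x \<le> b" for a b x
    using that by (auto simp: J dist_real_def)
  obtain lo where lo: "t0 \<le> lo" "lo < T"
    and \<phi>lo: "\<And>t. t \<in> {lo<..<T} \<Longrightarrow> \<phi> t \<in> ball c \<epsilon> \<and> \<phi> t0 < \<phi> t \<and> \<phi> t \<le> \<phi> T"
    using continuous_strict_mono_near_endpoint[OF \<phi>c \<phi>m tT open_ball] u \<phi>T J by blast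
  define N where "N = {lo<..<T}"
  have \<phi>N: "\<phi> t \<in> J" "\<phi> t \<le> u" if "t \<in> N" for t
    using \<phi>lo[of t] that u \<phi>0 \<phi>T by (auto simp: N_def J)
  define k where "k = (\<lambda>t. h (\<phi> t))"
  have kc: "continuous_on N k"
    unfolding k_def N_def
    by (rule continuous_on_compose2[OF hc continuous_on_subset[OF \<phi>c]]) (use \<phi>N lo in \<open>auto simp: N_def\<close>)
  have km: "strict_mono_on N k"
    unfolding k_def N_def using \<phi>N lo
    by (intro strict_mono_onI strict_mono_onD[OF hm] strict_mono_onD[OF \<phi>m]) (auto simp: N_def)
  have kpq: "k t \<in> {p<..<q}" if t: "t \<in> N" for t
  proof -
    define t' where "t' = (lo + t) / 2"
    have t': "t' \<in> N" "t' < t" using t by (auto simp: N_def t'_def)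
    then have "p < k t"
      using h[OF \<phi>N(1)[OF t'(1)]] strict_mono_onD[OF km t'(1) t] by (simp add: k_def)
    moreover have "k t < h v" using strict_mono_onD[OF hm \<phi>N(1)[OF t] v(1)] \<phi>N(2)[OF t] v(2) by (simp add: k_def)
    ultimately show ?thesis using h[OF v(1)] by auto
  qed
  have keq: "\<delta> t = \<gamma> (k t)" if "t \<in> N" for t
    using \<delta>g[of t] h[OF \<phi>N(1)[OF that]] that lo by (auto simp: k_def N_def)
  define t1 where "t1 = (lo + T) / 2"
  have t1: "t1 \<in> N" "t0 < t1" "t1 < T" using lo by (auto simp: t1_def N_def)
  have N: "open N" "N \<subseteq> {t0<..<T}" using lo by (auto simp: N_def)
  have kv: "k t1 < h v" "h v \<le> q" using kpq[OF t1(1)] h[OF v(1)] strict_mono_onD[OF hm \<phi>N(1)[OF t1(1)] v(1)] \<phi>N(2)[OF t1(1)] v(2)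
    by (auto simp: k_def)
  obtain T' E where T': "t1 < T'" and Ec: "continuous_on {t1..T'} E" and Em: "strict_mono_on {t1..T'} E"
    and E0: "E t1 = k t1" and ET: "E T' = h v"
    and Fc: "continuous_on {t0..T'} (\<lambda>t. if t \<le> t1 then \<delta> t else \<gamma> (E t))"
    and Fr: "\<exists>F' F''. regular_C2_with (\<lambda>t. if t \<le> t1 then \<delta> t else \<gamma> (E t)) F' F'' {t0<..<T'}"
    using regular_continuation[OF \<delta> t1(2,3) \<gamma> N(1) t1(1) N(2) kc km kpq keq kv] by blast
  have a1: "\<phi> t1 \<in> J" "\<phi> t1 \<le> v" using \<phi>N[OF t1(1)] v(2) by auto
  then have "{\<phi> t1..v} \<subseteq> J" using Jconv[OF _ v(1)] by auto
  moreover obtain F' F'' where "regular_C2_with (\<lambda>t. if t \<le> t1 then \<delta> t else \<gamma> (E t)) F' F'' {t0<..<T'}"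
    using Fr by blast
  ultimately show ?thesis
    using t1 T' E0 ET a1(2) v(1) \<delta>g h
    by (intro regular_prefix_glue[OF gi _ _ Fc _ continuous_on_subset[OF \<phi>c] monotone_on_subset[OF \<phi>m] \<phi>0 _ Ec Em _ ET _
          continuous_on_subset[OF hc] monotone_on_subset[OF hm]])
       (auto simp: k_def J)
qed

lemma arc_regular_prefix:
  fixes g :: "real \<Rightarrow> real^2"
  assumes arc: "arc g" and gL: "path_image g \<subseteq> L"
    and charts: "\<forall>P\<in>L. \<exists>r>0. \<exists>\<gamma> a b. regular_curve \<gamma> a b \<and> ball P r \<inter> L = \<gamma> ` {a<..<b}"
  shows "regular_prefix g 1"
proof -
  have fac: "\<exists>\<gamma> p q \<epsilon> h. \<epsilon> > 0 \<and> regular_factorisation g (ball u \<epsilon> \<inter> {0..1}) \<gamma> p q h"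
    if u: "u \<in> {0..1}" for u
  proof -
    have "g u \<in> L" using gL u by (auto simp: path_image_def)
    obtain r \<gamma> a b where "regular_curve \<gamma> a b" "r > 0" "ball (g u) r \<inter> L = \<gamma> ` {a<..<b}"
      using bspec[OF charts \<open>g u \<in> L\<close>] by blast
    from arc_regular_factorisation[OF arc gL u this] show ?thesis by metis
  qed
  obtain \<gamma> p q \<epsilon> h where "\<epsilon> > 0" "regular_factorisation g (ball 0 \<epsilon> \<inter> {0..1}) \<gamma> p q h"
    using fac[of 0] by auto
  then obtain u0 where u0: "0 < u0" "u0 \<le> 1" "regular_prefix g u0"
    by (rule regular_prefix_start)
  show ?thesis
  proof (rule connected_induction_simple[of "{0<..1}" u0 1 "regular_prefix g"])
    fix c :: real assume c: "c \<in> {0<..1}"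
    obtain \<gamma> p q \<epsilon> h where "\<epsilon> > 0" and fac_c: "regular_factorisation g (ball c \<epsilon> \<inter> {0..1}) \<gamma> p q h"
      using fac[of c] c by auto
    have "openin (top_of_set {0<..1}) (ball c \<epsilon> \<inter> {0<..1::real})"
      using openin_open_Int[of "ball c \<epsilon>" "{0<..1::real}"] by (simp add: Int_commute)
    moreover have "regular_prefix g y" if xy: "x \<in> ball c \<epsilon> \<inter> {0<..1}" "y \<in> ball c \<epsilon> \<inter> {0<..1}"
      and "regular_prefix g x" for x y
    proof (cases "y \<le> x")
      case True
      with xy show ?thesis using regular_prefix_shorten[OF \<open>regular_prefix g x\<close>] by simp
    next
      case False
      have "inj_on g {0..1}" using arc by (simp add: arc_def)
      moreover have "x \<in> ball c \<epsilon> \<inter> {0..1}" "y \<in> ball c \<epsilon> \<inter> {0..1}" using xy by auto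
      ultimately show ?thesis
        using regular_prefix_extend[OF _ fac_c refl _ _ _ _ \<open>regular_prefix g x\<close>] xy False by simp
    qed
    moreover have "c \<in> ball c \<epsilon> \<inter> {0<..1}" using c \<open>\<epsilon> > 0\<close> by simp
    ultimately show "\<exists>T. openin (top_of_set {0<..1}) T \<and> c \<in> T \<and>
        (\<forall>x\<in>T. \<forall>y\<in>T. regular_prefix g x \<longrightarrow> regular_prefix g y)"
      by blast
  next
    show "connected {0<..1::real}" by (simp add: is_interval_connected)
  qed (use u0 in auto)
qed

lemma regular_prefix_one_imp_curve:
  assumes "regular_prefix g 1"
  shows "\<exists>\<delta> a b. regular_curve \<delta> a b \<and> \<delta> ` {a..b} \<subseteq> path_image g \<and>
    \<delta> a = pathstart g \<and> \<delta> b = pathfinish g"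
proof -
  obtain \<delta> t0 T \<phi> where \<delta>: "regular_curve \<delta> t0 T" and \<phi>m: "strict_mono_on {t0..T} \<phi>"
    and \<phi>0: "\<phi> t0 = 0" and \<phi>T: "\<phi> T = 1" and \<delta>g: "\<forall>t\<in>{t0..T}. \<delta> t = g (\<phi> t)"
    using assms unfolding regular_prefix_def by blast
  have "t0 < T" using \<delta> by (simp add: regular_curve_iff)
  then have "\<phi> t \<in> {0..1}" if "t \<in> {t0..T}" for t
    using that strict_mono_on_leD[OF \<phi>m, of t0 t] strict_mono_on_leD[OF \<phi>m, of t T] \<phi>0 \<phi>T by auto
  then have "\<delta> ` {t0..T} \<subseteq> path_image g"
    using \<delta>g by (auto simp: path_image_def)
  moreover have "\<delta> t0 = pathstart g" "\<delta> T = pathfinish g"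
    using \<delta>g \<phi>0 \<phi>T \<open>t0 < T\<close> by (auto simp: pathstart_def pathfinish_def)
  ultimately show ?thesis using \<delta> by blast
qed

lemma regular_curve_in_open_charts:
  fixes L :: "(real^2) set"
  assumes "path_connected L"
    and charts: "\<forall>P\<in>L. \<exists>r>0. \<exists>\<gamma> a b. regular_curve \<gamma> a b \<and> ball P r \<inter> L = \<gamma> ` {a<..<b}"
    and "S \<in> L" "Q \<in> L" "S \<noteq> Q"
  shows "\<exists>\<gamma> a b. regular_curve \<gamma> a b \<and> \<gamma> ` {a..b} \<subseteq> L \<and> \<gamma> a = S \<and> \<gamma> b = Q"
proof -
  obtain p where "path p" "path_image p \<subseteq> L" "pathstart p = S" "pathfinish p = Q"
    using assms(1,3,4) unfolding path_connected_def by blast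
  obtain g where "arc g" "path_image g \<subseteq> path_image p" "pathstart g = S" "pathfinish g = Q"
    by (rule path_contains_arc[OF \<open>path p\<close> \<open>pathstart p = S\<close> \<open>pathfinish p = Q\<close> assms(5)])
  moreover from this(2) have gL: "path_image g \<subseteq> L" using \<open>path_image p \<subseteq> L\<close> by (rule order_trans)
  ultimately show ?thesis
    using regular_prefix_one_imp_curve[OF arc_regular_prefix[OF _ gL charts]] gL by (metis order_trans)
qed

theorem lemma5p1:
  fixes L :: "(real^2) set" and S Q :: "real^2"
  assumes "connected L"
    and "\<forall>P\<in>L. \<exists>r>0. \<exists>\<gamma> a b. regular_curve \<gamma> a b \<and>
            (ball P r \<inter> L = \<gamma> ` {a..b} \<or> ball P r \<inter> L = \<gamma> ` {a<..<b})"
    and "S \<in> L" and "Q \<in> L" and "S \<noteq> Q"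
  shows "\<exists>\<gamma> a b. regular_curve \<gamma> a b \<and> \<gamma> ` {a..b} \<subseteq> L \<and> \<gamma> a = S \<and> \<gamma> b = Q"
proof (cases "\<exists>P\<in>L. \<exists>r>0. \<exists>\<gamma> a b. regular_curve \<gamma> a b \<and> ball P r \<inter> L = \<gamma> ` {a..b}")
  case True
  then obtain P r \<gamma> a b where "P \<in> L" "r > 0" and \<gamma>: "regular_curve \<gamma> a b"
    and chart: "ball P r \<inter> L = \<gamma> ` {a..b}"
    by blast
  have "continuous_on {a..b} \<gamma>" using \<gamma> by (simp add: regular_curve_iff)
  from closed_chart_covers[OF assms(1) \<open>P \<in> L\<close> \<open>r > 0\<close> chart this]
  have "\<gamma> ` {a..b} = L" .
  with regular_curve_joining_points[OF \<gamma>, of S Q] assms(3-5) show ?thesis by simp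
next
  case False
  have charts: "\<forall>P\<in>L. \<exists>r>0. \<exists>\<gamma> a b. regular_curve \<gamma> a b \<and> ball P r \<inter> L = \<gamma> ` {a<..<b}"
  proof
    fix P assume "P \<in> L"
    obtain r \<gamma> a b where "r > 0" "regular_curve \<gamma> a b"
      and "ball P r \<inter> L = \<gamma> ` {a..b} \<or> ball P r \<inter> L = \<gamma> ` {a<..<b}"
      using bspec[OF assms(2) \<open>P \<in> L\<close>] by blast
    moreover have "ball P r \<inter> L \<noteq> \<gamma> ` {a..b}"
      using False \<open>P \<in> L\<close> \<open>r > 0\<close> \<open>regular_curve \<gamma> a b\<close> by blast
    ultimately show "\<exists>r>0. \<exists>\<gamma> a b. regular_curve \<gamma> a b \<and> ball P r \<inter> L = \<gamma> ` {a<..<b}"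
      by blast
  qed
  show ?thesis
    using regular_curve_in_open_charts[OF connected_locally_regular_curve_imp_path_connected[OF assms(1,2)]
        charts assms(3-5)] .
qed

end
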